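(* Let $N:[0,\infty)\to\mathbb R$, $T>0$, $A>0$, an integer $\ell\ge0$, $\delta>0$, and a finite set $\mathcal T\subset[0,T]$ with $\operatorname{sep}(\mathcal T)\ge4(\ell+1)\delta$ be given. Let \[ \widehat{\mathcal T}\subset\Big\{t\in[0,T]:\Big|\tfrac1\delta\Delta^{(\ell+1)}_\delta N(t)\Big|\ge\tfrac A2\Big\} \] be a subset of maximal size satisfying $\operatorname{sep}(\widehat{\mathcal T})>2(\ell+1)\delta$. If \[ \mathcal T\subseteq\Big\{t\in[\ell\delta,T]:\Big|\tfrac1\delta\Delta^{(\ell+1)}_\delta N(t)\Big|\ge\tfrac A2\Big\}\subseteq\big\{t\in[0,T]:\exists t'\in\mathcal T\text{ with }|t-t'|\le(\ell+1)\delta\big\}, \] then $|\mathcal T|=|\widehat{\mathcal T}|$ and $d_{\max}(\mathcal T,\widehat{\mathcal T})\le2(\ell+1)\delta$.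
   Context: $\Delta^{(j)}_\delta N(t):=\sum_{i=0}^{j}(-1)^{j-i}\binom{j}{i}N(t+(i-j+1)\delta)$, defined for $t\ge(j-1)\delta$ (sets above consist of $t$ where it is defined). $\operatorname{sep}(S):=\min\{|a-b|:a,b\in S,a\ne b\}$, $=\infty$ if no such pair. For finite $\mathcal S,\mathcal T$ with $|\mathcal S|=|\mathcal T|$: $d_{\max}=0$ if both empty, otherwise with sorted elements $s_1<\dots<s_k$, $t_1<\dots<t_k$, $d_{\max}(\mathcal S,\mathcal T)=\max_i|s_i-t_i|$. *)

theory Defs
  imports Complex_Main "HOL-Library.Extended_Real"
begin

text \<open>Finite difference operator: defined (meaningfully) for t \<ge> (j-1) delta.\<close>
definition fdiff :: "nat \<Rightarrow> real \<Rightarrow> (real \<Rightarrow> real) \<Rightarrow> real \<Rightarrow> real" where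
  "fdiff j \<delta> N t = (\<Sum>i=0..j. (-1) ^ (j - i) * real (j choose i)
                          * N (t + (real i - real j + 1) * \<delta>))"

text \<open>Separation of a set: infimum of distances of distinct pairs; infinity if no pair.\<close>
definition sep :: "real set \<Rightarrow> ereal" where
  "sep S = Inf {ereal \<bar>a - b\<bar> | a b. a \<in> S \<and> b \<in> S \<and> a \<noteq> b}"

definition dmax :: "real set \<Rightarrow> real set \<Rightarrow> real" where
  "dmax S T = (if S = {} \<and> T = {} then 0 else
      Max {\<bar>sorted_list_of_set S ! i - sorted_list_of_set T ! i\<bar> | i. i < card S})"

end

theory Submission
  imports Defs
begin

text \<open>
  Put \<open>r = (l + 1) \<delta>\<close>. Every point of \<open>Th\<close> lies within \<open>r\<close> of a point of \<open>Ts\<close>, and points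
  of \<open>Th\<close> are more than \<open>2r\<close> apart, so choosing such a partner is an injection
  \<open>Th \<rightarrow> Ts\<close>. Conversely \<open>Ts\<close> is itself a competitor in the maximality condition
  (its separation \<open>4r\<close> exceeds \<open>2r\<close>), so \<open>|Ts| \<le> |Th|\<close> and the injection is a bijection.
  Since \<open>Ts\<close> is \<open>2r\<close>-separated, the bijection preserves order, hence it is exactly the
  sorted pairing used by \<open>dmax\<close>, and every pair is within \<open>r \<le> 2r\<close>.
\<close>

lemma sep_le_abs_diff:
  assumes "a \<in> S" "b \<in> S" "a \<noteq> b"
  shows "sep S \<le> ereal \<bar>a - b\<bar>"
  unfolding sep_def by (rule Inf_lower) (use assms in blast)

lemma sorted_list_of_set_image_strict_mono:
  fixes f :: "'a::linorder \<Rightarrow> 'b::linorder"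
  assumes "finite A" "strict_mono_on A f"
  shows "sorted_list_of_set (f ` A) = map f (sorted_list_of_set A)"
proof -
  let ?xs = "sorted_list_of_set A"
  have sorted: "sorted_wrt (<) ?xs" and set: "set ?xs = A" using assms(1) by simp_all
  have "sorted_wrt (<) (map f ?xs)"
    unfolding sorted_wrt_map
    by (rule sorted_wrt_mono_rel[OF _ sorted]) (use set assms(2) in \<open>auto intro: strict_mono_onD\<close>)
  moreover have "set (map f ?xs) = f ` A" "length (map f ?xs) = card (f ` A)"
    using assms card_image[OF strict_mono_on_imp_inj_on[OF assms(2)]] by simp_all
  ultimately show ?thesis
    using sorted_list_of_set_unique[of "f ` A" "map f ?xs"] assms(1) by simp
qed

lemma dmax_le_strict_mono_matching:
  assumes "finite H" "strict_mono_on H f" "f ` H = S"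
    and close: "\<And>h. h \<in> H \<Longrightarrow> \<bar>f h - h\<bar> \<le> r" and "r \<ge> 0"
  shows "dmax S H \<le> r"
proof (cases "H = {}")
  case True
  then show ?thesis using assms(3,5) by (simp add: dmax_def)
next
  case False
  have card_eq: "card S = card H"
    using assms(3) card_image[OF strict_mono_on_imp_inj_on[OF assms(2)]] by simp
  have sorted_S: "sorted_list_of_set S = map f (sorted_list_of_set H)"
    using sorted_list_of_set_image_strict_mono[OF assms(1,2)] assms(3) by simp
  have "\<bar>sorted_list_of_set S ! i - sorted_list_of_set H ! i\<bar> \<le> r" if "i < card S" for i
  proof -
    have "i < length (sorted_list_of_set H)" using that card_eq by simp
    then have "sorted_list_of_set H ! i \<in> H" using assms(1) by (metis nth_mem set_sorted_list_of_set)
    with sorted_S \<open>i < length (sorted_list_of_set H)\<close> show ?thesis by (simp add: close)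
  qed
  moreover have "card S > 0" using False assms(1) card_eq by (simp add: card_gt_0_iff)
  ultimately have "Max {\<bar>sorted_list_of_set S ! i - sorted_list_of_set H ! i\<bar> | i. i < card S} \<le> r"
    by (intro Max.boundedI) auto
  then show ?thesis using False by (simp add: dmax_def)
qed

text \<open>
  Order is preserved because \<open>x < y\<close> with \<open>f y < f x\<close> would force
  \<open>0 < f x - f y \<le> x - y + 2r < 2r\<close>, against the \<open>2r\<close>-separation of \<open>S\<close>.
\<close>

lemma strict_mono_near_matching:
  fixes S H :: "real set"
  assumes "finite S" "card S \<le> card H"
    and sep_H: "\<And>a b. a \<in> H \<Longrightarrow> b \<in> H \<Longrightarrow> a \<noteq> b \<Longrightarrow> \<bar>a - b\<bar> > 2 * r"
    and sep_S: "\<And>a b. a \<in> S \<Longrightarrow> b \<in> S \<Longrightarrow> a \<noteq> b \<Longrightarrow> \<bar>a - b\<bar> \<ge> 2 * r"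
    and near: "\<And>h. h \<in> H \<Longrightarrow> \<exists>s\<in>S. \<bar>s - h\<bar> \<le> r"
  obtains f where "strict_mono_on H f" "f ` H = S" "\<And>h. h \<in> H \<Longrightarrow> \<bar>f h - h\<bar> \<le> r"
proof -
  define f where "f h = (SOME s. s \<in> S \<and> \<bar>s - h\<bar> \<le> r)" for h
  have f: "f h \<in> S" "\<bar>f h - h\<bar> \<le> r" if "h \<in> H" for h
    using someI_ex[OF near[OF that, unfolded Bex_def]] unfolding f_def by blast+
  have inj: "inj_on f H"
  proof (rule inj_onI, rule ccontr)
    fix x y assume "x \<in> H" "y \<in> H" "f x = f y" "x \<noteq> y"
    with sep_H[of x y] f[of x] f[of y] show False by linarith
  qed
  have "f ` H \<subseteq> S" using f by blast
  moreover have "card (f ` H) = card S"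
    using card_image[OF inj] card_inj_on_le[OF inj \<open>f ` H \<subseteq> S\<close> assms(1)] assms(2) by simp
  ultimately have image: "f ` H = S" using card_subset_eq[OF assms(1)] by blast
  have "strict_mono_on H f"
  proof (rule strict_mono_onI)
    fix x y assume xy: "x \<in> H" "y \<in> H" "x < y"
    then have "f x \<noteq> f y" using inj by (auto dest: inj_onD)
    with xy sep_S[of "f x" "f y"] f[of x] f[of y] show "f x < f y" by linarith
  qed
  with image f(2) show thesis using that by blast
qed

theorem proposition3p2:
  fixes N :: "real \<Rightarrow> real" and T A \<delta> :: real and l :: nat
    and Ts Th :: "real set"
  assumes "T > 0" and "A > 0" and "\<delta> > 0"
    and "finite Ts" and "Ts \<subseteq> {0..T}"
    and "sep Ts \<ge> ereal (4 * (real l + 1) * \<delta>)"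
    and "finite Th"
    and "Th \<subseteq> {t. real l * \<delta> \<le> t \<and> t \<le> T \<and> \<bar>fdiff (l+1) \<delta> N t / \<delta>\<bar> \<ge> A / 2}"
    and "sep Th > ereal (2 * (real l + 1) * \<delta>)"
    and "\<forall>U. finite U \<and>
              U \<subseteq> {t. real l * \<delta> \<le> t \<and> t \<le> T \<and> \<bar>fdiff (l+1) \<delta> N t / \<delta>\<bar> \<ge> A / 2} \<and>
              sep U > ereal (2 * (real l + 1) * \<delta>) \<longrightarrow> card U \<le> card Th"
    and "Ts \<subseteq> {t. real l * \<delta> \<le> t \<and> t \<le> T \<and> \<bar>fdiff (l+1) \<delta> N t / \<delta>\<bar> \<ge> A / 2}"
    and "{t. real l * \<delta> \<le> t \<and> t \<le> T \<and> \<bar>fdiff (l+1) \<delta> N t / \<delta>\<bar> \<ge> A / 2}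
           \<subseteq> {t. 0 \<le> t \<and> t \<le> T \<and> (\<exists>t'\<in>Ts. \<bar>t - t'\<bar> \<le> (real l + 1) * \<delta>)}"
  shows "card Ts = card Th \<and> dmax Ts Th \<le> 2 * (real l + 1) * \<delta>"
proof -
  define r where "r = (real l + 1) * \<delta>"
  have "r > 0" using assms(3) by (simp add: r_def)
  have sep_Ts: "\<bar>a - b\<bar> \<ge> 2 * r" if "a \<in> Ts" "b \<in> Ts" "a \<noteq> b" for a b
  proof -
    have "4 * r \<le> \<bar>a - b\<bar>"
      using order_trans[OF assms(6) sep_le_abs_diff[OF that]] by (simp add: r_def algebra_simps)
    with \<open>r > 0\<close> show ?thesis by linarith
  qed
  have sep_Th: "\<bar>a - b\<bar> > 2 * r" if "a \<in> Th" "b \<in> Th" "a \<noteq> b" for a b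
    using less_le_trans[OF assms(9) sep_le_abs_diff[OF that]] by (simp add: r_def algebra_simps)
  have "sep Ts > ereal (2 * (real l + 1) * \<delta>)"
    using assms(3) by (intro less_le_trans[OF _ assms(6)]) simp
  then have card_le: "card Ts \<le> card Th" using assms(4,10,11) by blast
  have near: "\<exists>s\<in>Ts. \<bar>s - h\<bar> \<le> r" if h: "h \<in> Th" for h
  proof -
    obtain s where "s \<in> Ts" "\<bar>h - s\<bar> \<le> r" using h assms(8,12) unfolding r_def by blast
    then show ?thesis by (auto simp: abs_minus_commute)
  qed
  obtain f where f: "strict_mono_on Th f" "f ` Th = Ts" "\<And>h. h \<in> Th \<Longrightarrow> \<bar>f h - h\<bar> \<le> r"
    using strict_mono_near_matching[OF assms(4) card_le sep_Th sep_Ts near] by blast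
  have "card Ts = card Th"
    using f(2) card_image[OF strict_mono_on_imp_inj_on[OF f(1)]] by simp
  moreover have "dmax Ts Th \<le> r"
    using dmax_le_strict_mono_matching[OF assms(7) f] \<open>r > 0\<close> by simp
  moreover have "2 * (real l + 1) * \<delta> = 2 * r" by (simp add: r_def)
  ultimately show ?thesis using \<open>r > 0\<close> by linarith
qed

end
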